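(* Let $V$ be a real vector space of dimension $m$, $\Gamma$ a finitely generated free abelian dense subgroup of $V$ acting by translations, and $\mathcal C$ a countable $\Gamma$-invariant collection of affine hyperplanes of $V$ with finitely many $\Gamma$-orbits and normals spanning $V$. Let $\mathcal W=\{W_1,\dots,W_f\}\subset\mathcal C$ with $f>m$ such that the set of normal directions of $W_1,\dots,W_f$ is indecomposable. Suppose that $\mathcal P$ consists of finitely many $\Gamma$-orbits. Then for every $0\le l\le m$ and every $A\in\mathcal I_l$, $$\mathrm{rk}\,\Gamma^A=l\,\frac{\mathrm{rk}\,\Gamma}{\dim V}.$$ In particular $\dim V$ divides $\mathrm{rk}\,\Gamma$.
   Context: $\mathcal P$ is the set of points that are $0$-dimensional intersections of $m$ elements of $\mathcal C$. For $A\subset\{1,\dots,f\}$, $W_A=\bigcap_{i\in A}W_i$, and $\Gamma^A\subset\Gamma$ is the stabilizer of $W_A$ (those $\gamma$ with $W_A+\gamma=W_A$). $\mathcal I_l$ is the collection of subsets $A\subset\{1,\dots,f\}$ with $m-l$ elements such that $W_A$ has dimension $l$. A finite set of pairwise non-parallel nonzero vectors spanning $V$ is indecomposable if it admits no partition $A_1\cup A_2$ into nonempty parts with $\mathrm{span}(A_1)\cap\mathrm{span}(A_2)=0$. *)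

theory Defs
  imports "HOL-Analysis.Analysis"
begin

definition int_independent :: "'v::real_vector set \<Rightarrow> bool" where
  "int_independent S \<longleftrightarrow>
     (\<forall>F c. finite F \<longrightarrow> F \<subseteq> S \<longrightarrow> (\<Sum>x\<in>F. of_int (c x) *\<^sub>R x) = 0 \<longrightarrow> (\<forall>x\<in>F. c x = (0::int)))"

definition int_span :: "'v::real_vector set \<Rightarrow> 'v set" where
  "int_span B = {\<Sum>x\<in>B. of_int (c x) *\<^sub>R x | c :: 'v \<Rightarrow> int. True}"

definition group_rank :: "'v::real_vector set \<Rightarrow> nat" where
  "group_rank G = Sup {card S | S. S \<subseteq> G \<and> finite S \<and> int_independent S}"

definition fg_free_subgroup :: "'v::real_vector set \<Rightarrow> bool" where
  "fg_free_subgroup G \<longleftrightarrow> (\<exists>B. finite B \<and> int_independent B \<and> G = int_span B)"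

definition affine_hyperplane :: "'v::euclidean_space set \<Rightarrow> bool" where
  "affine_hyperplane H \<longleftrightarrow> (\<exists>a b. a \<noteq> 0 \<and> H = {x. a \<bullet> x = b})"

definition normals :: "'v::euclidean_space set set \<Rightarrow> 'v set" where
  "normals C = {a. a \<noteq> 0 \<and> (\<exists>H\<in>C. \<exists>b. H = {x. a \<bullet> x = b})}"

definition translate :: "'v::real_vector \<Rightarrow> 'v set \<Rightarrow> 'v set" where
  "translate g H = (\<lambda>x. x + g) ` H"

definition finitely_many_orbits :: "'v::real_vector set \<Rightarrow> 'v set set \<Rightarrow> bool" where
  "finitely_many_orbits G C \<longleftrightarrow> (\<exists>F. finite F \<and> F \<subseteq> C \<and> C = {translate g H | g H. g \<in> G \<and> H \<in> F})"

definition finitely_many_point_orbits :: "'v::real_vector set \<Rightarrow> 'v set \<Rightarrow> bool" where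
  "finitely_many_point_orbits G P \<longleftrightarrow> (\<exists>Q. finite Q \<and> Q \<subseteq> P \<and> P = {q + g | q g. q \<in> Q \<and> g \<in> G})"

definition vertex_set :: "nat \<Rightarrow> 'v::real_vector set set \<Rightarrow> 'v set" where
  "vertex_set m C = {p. \<exists>S. S \<subseteq> C \<and> finite S \<and> card S = m \<and> \<Inter>S = {p}}"

text \<open>Indecomposability of the set of directions spanned by the vectors n i, i in I.
  (Parallel vectors placed in different parts automatically give a nonzero common span,
  so this is exactly indecomposability of the set of normal directions.)\<close>
definition indecomposable :: "(nat \<Rightarrow> 'v::euclidean_space) \<Rightarrow> nat set \<Rightarrow> bool" where
  "indecomposable n I \<longleftrightarrow> (\<forall>i\<in>I. n i \<noteq> 0) \<and> span (n ` I) = UNIV \<and>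
     \<not> (\<exists>I1 I2. I1 \<noteq> {} \<and> I2 \<noteq> {} \<and> I1 \<union> I2 = I \<and> I1 \<inter> I2 = {} \<and>
            span (n ` I1) \<inter> span (n ` I2) = {0})"

definition W_int :: "(nat \<Rightarrow> 'v set) \<Rightarrow> nat set \<Rightarrow> 'v set" where
  "W_int W A = (\<Inter>i\<in>A. W i)"

definition stabilizer :: "'v::real_vector set \<Rightarrow> 'v set \<Rightarrow> 'v set" where
  "stabilizer G X = {g \<in> G. translate g X = X}"

definition I_set :: "(nat \<Rightarrow> 'v::euclidean_space set) \<Rightarrow> nat \<Rightarrow> nat \<Rightarrow> nat set set" where
  "I_set W f l = {A. A \<subseteq> {1..f} \<and> card A = DIM('v) - l \<and> aff_dim (W_int W A) = int l}"

end

theory Submission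
  imports Defs
begin

text \<open>
  Everything is measured in the \<rat>-span U of \<Gamma>: the rank of a subgroup of \<Gamma> is the
  \<rat>-dimension of its \<rat>-span, and the stabiliser \<Gamma>^A is \<Gamma> intersected with the direction
  space of W_A.  Choose a basis B of V among the normals n_i and its dual basis e.  Translating
  the hyperplanes W_i (i \<in> B) by elements of \<Gamma> produces the vertices
  z + k (n_j \<bullet> \<gamma>) e_j, k \<in> \<nat>; as they lie in finitely many \<Gamma>-orbits, two of them differ
  by an element of \<Gamma>, so the coordinate projection x \<mapsto> (n_j \<bullet> x) e_j maps U into U.  Rank-nullity
  for these projections gives rk \<Gamma>^A + \<Sum>_{i \<in> A} codim i = rk \<Gamma> for A \<subseteq> B, where
  codim i = rk \<Gamma> - rk \<Gamma>^{i}.  So the sum of codim over any basis is rk \<Gamma>, which makes codim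
  invariant under basis exchange; indecomposability of the normals means that basis exchanges
  connect all indices, hence codim is constant, equal to rk \<Gamma> / m, and rk \<Gamma>^A = l rk \<Gamma> / m.
\<close>

section \<open>Integer spans and rational dimension\<close>

definition scaleQ :: "rat \<Rightarrow> 'a::real_vector \<Rightarrow> 'a" where
  "scaleQ q x = of_rat q *\<^sub>R x"

interpretation Q: vector_space "scaleQ :: rat \<Rightarrow> 'a::real_vector \<Rightarrow> 'a"
  by unfold_locales (simp_all add: scaleQ_def scaleR_add_right scaleR_add_left of_rat_add of_rat_mult)

lemma linear_imp_Q_linear: "linear f \<Longrightarrow> Vector_Spaces.linear scaleQ scaleQ f"
  unfolding Vector_Spaces.linear_iff
  by (auto simp: scaleQ_def linear_add linear_scale Q.vector_space_axioms)

lemma subspace_imp_Q_subspace: "subspace Z \<Longrightarrow> Q.subspace Z"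
  unfolding Q.subspace_def subspace_def scaleQ_def by auto

context vector_space begin

lemma span_inter_span_Diff:
  assumes "independent B" "finite B" "K \<subseteq> B"
  shows "span K \<inter> span (B - K) = {0}"
proof (intro equalityI subsetI)
  fix x assume "x \<in> span K \<inter> span (B - K)"
  then obtain u w where u: "x = (\<Sum>v\<in>K. scale (u v) v)" and w: "x = (\<Sum>v\<in>B - K. scale (w v) v)"
    using span_finite[of K] span_finite[of "B - K"] finite_subset[OF assms(3,2)] assms(2)
    by (metis (no_types, lifting) IntE finite_Diff rangeE)
  define d where "d v = (if v \<in> K then u v else - w v)" for v
  have "(\<Sum>v\<in>B. scale (d v) v) = (\<Sum>v\<in>B - K. scale (d v) v) + (\<Sum>v\<in>K. scale (d v) v)"
    using sum.subset_diff[OF assms(3,2)] .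
  also have "\<dots> = 0"
    using u w by (simp add: d_def sum_negf)
  finally have "d v = 0" if "v \<in> B" for v
    using independentD[OF assms(1,2) subset_refl] that u w by simp
  then have "\<forall>v\<in>K. u v = 0" using assms(3) unfolding d_def by (metis subsetD)
  then show "x \<in> {0}" using u by simp
qed (simp add: span_zero)

lemma dim_eq_dim_kernel_add_dim_image:
  assumes lin: "Vector_Spaces.linear scale scale f"
    and V: "subspace V" "V \<subseteq> span S" "finite S"
  shows "dim V = dim (V \<inter> {x. f x = 0}) + dim (f ` V)"
proof -
  interpret L: Vector_Spaces.linear scale scale f by (rule lin)
  obtain K where K: "K \<subseteq> V \<inter> {x. f x = 0}" "independent K" "V \<inter> {x. f x = 0} \<subseteq> span K"
     "card K = dim (V \<inter> {x. f x = 0})"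
    by (rule basis_exists)
  obtain B where B: "K \<subseteq> B" "B \<subseteq> V" "independent B" "V \<subseteq> span B"
    using maximal_independent_subset_extend[of K V] K by auto
  have finB: "finite B" using independent_span_bound[OF V(3) B(3)] B(2) V(2) by auto
  have spanB: "span B = V" using B(2,4) V(1) span_minimal by blast
  define E where "E = B - K"
  have injE: "inj_on f (span E)"
  proof (subst L.inj_on_iff_eq_0[OF subspace_span], intro ballI impI)
    fix x assume x: "x \<in> span E" "f x = 0"
    then have "x \<in> span K" using K(3) spanB span_mono[of E B] E_def by auto
    then show "x = 0" using span_inter_span_Diff[OF B(3) finB B(1)] x(1) E_def by auto
  qed
  have "f ` V = span (f ` B)" using spanB L.span_image by metis
  also have "\<dots> = span (f ` E)"
  proof -
    have "f ` B \<subseteq> insert 0 (f ` E)" using K(1) E_def by auto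
    then show ?thesis using span_mono[of "f ` E" "f ` B"] span_insert_0 E_def
      by (metis Diff_subset image_mono span_mono subset_antisym)
  qed
  finally have "dim (f ` V) = card E"
    using dim_span_eq_card_independent L.independent_injective_image[OF _ injE]
      independent_mono[OF B(3)] card_image[OF inj_on_subset[OF injE span_superset]] E_def
    by (metis Diff_subset)
  moreover have "card B = card K + card E"
    using E_def B(1) finB by (metis card_Diff_subset card_mono finite_subset le_add_diff_inverse)
  ultimately show ?thesis using basis_card_eq_dim[OF B(2,4,3)] K(4) by simp
qed

end

lemma int_span_zero: "0 \<in> int_span B"
  unfolding int_span_def by (auto intro: exI[of _ "\<lambda>_. 0"])

lemma int_span_add: "x \<in> int_span B \<Longrightarrow> y \<in> int_span B \<Longrightarrow> x + y \<in> int_span B"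
  unfolding int_span_def
proof clarify
  fix c d :: "'a \<Rightarrow> int"
  have "(\<Sum>x\<in>B. of_int (c x) *\<^sub>R x) + (\<Sum>x\<in>B. of_int (d x) *\<^sub>R x) = (\<Sum>x\<in>B. of_int (c x + d x) *\<^sub>R x)"
    by (simp add: sum.distrib scaleR_add_left)
  then show "\<exists>e. (\<Sum>x\<in>B. of_int (c x) *\<^sub>R x) + (\<Sum>x\<in>B. of_int (d x) *\<^sub>R x) = (\<Sum>x\<in>B. of_int (e x) *\<^sub>R x) \<and> True"
    by (intro exI[of _ "\<lambda>x. c x + d x"] conjI TrueI)
qed

lemma int_span_scale: "x \<in> int_span B \<Longrightarrow> of_int k *\<^sub>R x \<in> int_span B"
  unfolding int_span_def
proof clarify
  fix c :: "'a \<Rightarrow> int"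
  have "of_int k *\<^sub>R (\<Sum>x\<in>B. of_int (c x) *\<^sub>R x) = (\<Sum>x\<in>B. of_int (k * c x) *\<^sub>R x)"
    by (simp add: scaleR_sum_right)
  then show "\<exists>e. of_int k *\<^sub>R (\<Sum>x\<in>B. of_int (c x) *\<^sub>R x) = (\<Sum>x\<in>B. of_int (e x) *\<^sub>R x) \<and> True"
    by (intro exI[of _ "\<lambda>x. k * c x"] conjI TrueI)
qed

lemma int_span_diff: "x \<in> int_span B \<Longrightarrow> y \<in> int_span B \<Longrightarrow> x - y \<in> int_span B"
  using int_span_add[of x B "of_int (-1) *\<^sub>R y"] int_span_scale[of y B "-1"] by simp

lemma int_span_base:
  assumes "finite B" "b \<in> B"
  shows "b \<in> int_span B"
proof -
  have "(\<Sum>x\<in>B. of_int (if x = b then 1 else 0) *\<^sub>R x) = (\<Sum>x\<in>B. if x = b then x else 0)"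
    by (rule sum.cong) auto
  then have "b = (\<Sum>x\<in>B. of_int (if x = b then 1 else 0) *\<^sub>R x)"
    using assms by simp
  then show ?thesis unfolding int_span_def by (intro CollectI exI[of _ "\<lambda>x. if x = b then 1 else 0"]) simp
qed

lemma int_span_subset_Q_span: "int_span B \<subseteq> Q.span B"
  unfolding int_span_def
proof clarify
  fix c :: "'a \<Rightarrow> int"
  have "(\<Sum>x\<in>B. of_int (c x) *\<^sub>R x) = (\<Sum>x\<in>B. scaleQ (of_int (c x)) x)"
    by (simp add: scaleQ_def)
  also have "\<dots> \<in> Q.span B"
    by (intro Q.span_sum Q.span_scale Q.span_base)
  finally show "(\<Sum>x\<in>B. of_int (c x) *\<^sub>R x) \<in> Q.span B" .
qed

lemma Q_span_int_span: "finite B \<Longrightarrow> Q.span (int_span B) = Q.span B"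
  using int_span_subset_Q_span[of B] int_span_base[of B]
  by (metis Q.span_mono Q.span_span subsetI subset_antisym)

lemma multiple_in_int_span:
  assumes "x \<in> Q.span (int_span B)"
  shows "\<exists>k::nat. k > 0 \<and> of_nat k *\<^sub>R x \<in> int_span B"
  using assms
proof (induction rule: Q.span_induct_alt)
  case base
  show ?case using int_span_zero by (intro exI[of _ 1]) auto
next
  case (step q b y)
  then obtain k :: nat where k: "k > 0" "of_nat k *\<^sub>R y \<in> int_span B" by blast
  obtain p d where pd: "quotient_of q = (p, d)" by (cases "quotient_of q")
  have d: "d > 0" using quotient_of_denom_pos[OF pd] .
  have "of_nat (nat d * k) *\<^sub>R (scaleQ q b + y) = of_int (p * int k) *\<^sub>R b + of_int d *\<^sub>R (of_nat k *\<^sub>R y)"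
    using d by (simp add: scaleQ_def quotient_of_div[OF pd] of_rat_divide scaleR_add_right)
  also have "\<dots> \<in> int_span B"
    by (intro int_span_add int_span_scale step.hyps k)
  finally show ?case using d k by (intro exI[of _ "nat d * k"]) auto
qed

lemma common_denominator:
  fixes u :: "'b \<Rightarrow> rat"
  assumes "finite F"
  shows "\<exists>d::nat. d > 0 \<and> (\<forall>v\<in>F. of_nat d * u v \<in> \<int>)"
  using assms
proof (induction rule: finite_induct)
  case empty
  show ?case by (intro exI[of _ 1]) auto
next
  case (insert a F)
  then obtain d :: nat where d: "d > 0" "\<forall>v\<in>F. of_nat d * u v \<in> \<int>" by blast
  obtain p q where pq: "quotient_of (u a) = (p, q)" by (cases "quotient_of (u a)")
  have q: "q > 0" using quotient_of_denom_pos[OF pq] .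
  have "of_nat (d * nat q) * u v \<in> \<int>" if "v \<in> insert a F" for v
  proof (cases "v = a")
    case True
    have "rat_of_nat (nat q) = of_int q" using q by simp
    then have "of_nat (d * nat q) * u v = of_int (int d * p)"
      using q True by (simp add: quotient_of_div[OF pq])
    then show ?thesis by (metis Ints_of_int)
  next
    case False
    then have "of_nat (d * nat q) * u v = (of_nat d * u v) * of_int q"
      using q by simp
    moreover have "of_nat d * u v \<in> \<int>" using d(2) that False by simp
    ultimately show ?thesis by (metis Ints_mult Ints_of_int)
  qed
  then show ?case using d(1) q by (intro exI[of _ "d * nat q"]) auto
qed

lemma int_independent_imp_Q_independent:
  assumes "int_independent S"
  shows "Q.independent S"
  unfolding Q.independent_explicit_finite_subsets
proof (intro allI impI ballI)
  fix F u v assume F: "F \<subseteq> S" "finite F" and sum0: "(\<Sum>v\<in>F. scaleQ (u v) v) = 0" and v: "v \<in> F"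
  obtain d :: nat where d: "d > 0" "\<forall>v\<in>F. of_nat d * u v \<in> \<int>"
    using common_denominator[OF F(2)] by blast
  define c where "c w = \<lfloor>of_nat d * u w\<rfloor>" for w
  have c: "of_int (c w) = of_nat d * u w" if "w \<in> F" for w
    unfolding c_def using d(2) that by simp
  have "(\<Sum>w\<in>F. of_int (c w) *\<^sub>R w) = of_nat d *\<^sub>R (\<Sum>w\<in>F. scaleQ (u w) w)"
    unfolding scaleR_sum_right
  proof (rule sum.cong[OF refl])
    fix w assume "w \<in> F"
    then have "real_of_int (c w) = of_rat (of_nat d * u w)"
      by (metis c of_rat_of_int_eq)
    then show "of_int (c w) *\<^sub>R w = of_nat d *\<^sub>R scaleQ (u w) w" by (simp add: scaleQ_def of_rat_mult)
  qed
  also have "\<dots> = 0" by (simp add: sum0)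
  finally have "c v = 0" using assms F v unfolding int_independent_def by blast
  then show "u v = 0" using c[OF v] d(1) by simp
qed

lemma Q_independent_imp_int_independent:
  assumes "Q.independent S"
  shows "int_independent S"
  unfolding int_independent_def
proof (intro allI impI ballI)
  fix F c x assume F: "finite F" "F \<subseteq> S" and "(\<Sum>x\<in>F. of_int (c x) *\<^sub>R x) = 0" and x: "x \<in> F"
  then have "(\<Sum>x\<in>F. scaleQ (of_int (c x)) x) = 0" by (simp add: scaleQ_def)
  then have "(of_int (c x) :: rat) = 0"
    using Q.independentD[OF assms F(1) F(2), of "\<lambda>x. of_int (c x)"] x by blast
  then show "c x = 0" by simp
qed

lemma int_independent_iff_Q_independent: "int_independent S \<longleftrightarrow> Q.independent S"
  using int_independent_imp_Q_independent Q_independent_imp_int_independent by blast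

lemma group_rank_eq_Q_dim:
  assumes T: "finite T" and G: "G \<subseteq> Q.span T"
  shows "group_rank G = Q.dim G"
proof -
  obtain K where K: "K \<subseteq> G" "Q.independent K" "G \<subseteq> Q.span K" "card K = Q.dim G"
    by (rule Q.basis_exists)
  have "finite K" using Q.independent_span_bound[OF T K(2)] K(1) G by auto
  moreover have "int_independent K" using K(2) int_independent_iff_Q_independent by blast
  ultimately have mem: "Q.dim G \<in> {card S | S. S \<subseteq> G \<and> finite S \<and> int_independent S}"
    using K(1) unfolding K(4)[symmetric] by blast
  have "card S \<le> Q.dim G" if "S \<subseteq> G" "int_independent S" for S
    using Q.independent_span_bound[OF \<open>finite K\<close>] that K int_independent_iff_Q_independent
    by (metis subset_trans)
  then show ?thesis unfolding group_rank_def
    by (intro cSup_eq_maximum[OF mem]) blast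
qed

lemma Q_span_int_span_inter_subspace:
  assumes Z: "subspace Z"
  shows "Q.span (int_span B \<inter> Z) = Q.span (int_span B) \<inter> Z"
proof
  show "Q.span (int_span B \<inter> Z) \<subseteq> Q.span (int_span B) \<inter> Z"
    by (rule Q.span_minimal) (auto intro: Q.span_base Q.subspace_inter subspace_imp_Q_subspace[OF Z])
next
  show "Q.span (int_span B) \<inter> Z \<subseteq> Q.span (int_span B \<inter> Z)"
  proof
    fix x assume x: "x \<in> Q.span (int_span B) \<inter> Z"
    then obtain k :: nat where k: "k > 0" "of_nat k *\<^sub>R x \<in> int_span B"
      using multiple_in_int_span by blast
    have "of_nat k *\<^sub>R x \<in> Z" using x Z by (simp add: subspace_scale)
    then have "scaleQ (1 / of_nat k) (of_nat k *\<^sub>R x) \<in> Q.span (int_span B \<inter> Z)"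
      using k by (intro Q.span_scale Q.span_base) auto
    then show "x \<in> Q.span (int_span B \<inter> Z)" using k by (simp add: scaleQ_def of_rat_divide)
  qed
qed

section \<open>Bases of an indexed family of vectors\<close>

definition independent_family :: "(nat \<Rightarrow> 'v::real_vector) \<Rightarrow> nat set \<Rightarrow> bool" where
  "independent_family n X \<longleftrightarrow> inj_on n X \<and> independent (n ` X)"

definition index_basis :: "(nat \<Rightarrow> 'v::real_vector) \<Rightarrow> nat set \<Rightarrow> nat set \<Rightarrow> bool" where
  "index_basis n I B \<longleftrightarrow> B \<subseteq> I \<and> independent_family n B \<and> span (n ` B) = UNIV"

lemma independent_family_empty: "independent_family n {}"
  unfolding independent_family_def by (simp add: independent_empty)

lemma independent_family_insert:
  assumes "independent_family n X" "n j \<notin> span (n ` X)"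
  shows "independent_family n (insert j X)"
proof -
  have "n j \<notin> n ` X" using assms(2) span_superset[of "n ` X"] by (meson subsetD)
  then show ?thesis
    using assms unfolding independent_family_def by (auto simp: independent_insert)
qed

lemma independent_family_mono: "independent_family n X \<Longrightarrow> Y \<subseteq> X \<Longrightarrow> independent_family n Y"
  unfolding independent_family_def by (meson image_mono independent_mono inj_on_subset)

lemma independent_family_finite:
  fixes n :: "nat \<Rightarrow> 'v::euclidean_space"
  shows "independent_family n X \<Longrightarrow> finite X"
  unfolding independent_family_def by (metis finite_image_iff independent_bound)

lemma index_basis_card:
  fixes n :: "nat \<Rightarrow> 'v::euclidean_space"
  assumes "index_basis n I B"
  shows "card B = DIM('v)"
proof -
  have "card (n ` B) = dim (UNIV :: 'v set)"
    using basis_card_eq_dim[of "n ` B" UNIV] assms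
    unfolding index_basis_def independent_family_def by auto
  then show ?thesis
    using assms unfolding index_basis_def independent_family_def by (simp add: card_image)
qed

lemma extend_independent_family:
  fixes n :: "nat \<Rightarrow> 'v::euclidean_space"
  assumes "independent_family n B1" "finite J"
  shows "\<exists>B2. B2 \<subseteq> J - B1 \<and> independent_family n (B1 \<union> B2) \<and> n ` J \<subseteq> span (n ` (B1 \<union> B2))"
  using assms(2)
proof (induction rule: finite_induct)
  case empty
  show ?case using assms(1) by auto
next
  case (insert j J)
  then obtain B2 where B2: "B2 \<subseteq> J - B1" "independent_family n (B1 \<union> B2)"
    "n ` J \<subseteq> span (n ` (B1 \<union> B2))" by blast
  show ?case
  proof (cases "n j \<in> span (n ` (B1 \<union> B2))")
    case True
    then have "n ` insert j J \<subseteq> span (n ` (B1 \<union> B2))" using B2(3) by simp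
    then show ?thesis using B2(1,2) by blast
  next
    case False
    then have "j \<notin> B1" using span_superset[of "n ` (B1 \<union> B2)"] by (meson UnI1 image_eqI subsetD)
    moreover have "independent_family n (B1 \<union> insert j B2)"
      using independent_family_insert[OF B2(2) False] by simp
    moreover have "n ` insert j J \<subseteq> span (n ` (B1 \<union> insert j B2))"
      using B2(3) span_mono[of "n ` (B1 \<union> B2)" "n ` (B1 \<union> insert j B2)"]
        span_superset[of "n ` (B1 \<union> insert j B2)"] by auto
    ultimately show ?thesis using B2(1) by (intro exI[of _ "insert j B2"]) auto
  qed
qed

lemma exists_index_basis_superset:
  fixes n :: "nat \<Rightarrow> 'v::euclidean_space"
  assumes "independent_family n A" "A \<subseteq> I" "finite I" "span (n ` I) = UNIV"
  shows "\<exists>B. A \<subseteq> B \<and> index_basis n I B"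
proof -
  obtain B2 where B2: "B2 \<subseteq> I - A" "independent_family n (A \<union> B2)" "n ` I \<subseteq> span (n ` (A \<union> B2))"
    using extend_independent_family[OF assms(1,3)] by blast
  have "span (n ` (A \<union> B2)) = UNIV"
    using span_mono[OF B2(3)] assms(4) by (simp add: span_span top_unique)
  then show ?thesis using B2 assms(2) unfolding index_basis_def by (intro exI[of _ "A \<union> B2"]) auto
qed

lemma index_basis_exchange:
  fixes n :: "nat \<Rightarrow> 'v::euclidean_space"
  assumes B: "index_basis n I B" and B': "B' \<subseteq> B" and j: "j \<in> I" "n j \<notin> span (n ` B')"
  shows "\<exists>i\<in>B - B'. index_basis n I (insert j (B - {i}))"
proof -
  have indB: "independent_family n B" and BI: "B \<subseteq> I" and spanB: "span (n ` B) = UNIV"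
    using B unfolding index_basis_def by auto
  have finB: "finite B" using independent_family_finite[OF indB] .
  let ?P = "\<lambda>T. T \<subseteq> B - B' \<and> n j \<in> span (n ` (B' \<union> T))"
  have "B' \<union> (B - B') = B" using B' by blast
  then have "?P (B - B')" using spanB by simp
  then obtain T where T: "?P T" and Tmin: "\<And>T'. ?P T' \<Longrightarrow> card T \<le> card T'"
    using ex_has_least_nat[of ?P "B - B'" card] by blast
  have finT: "finite T" using T finB finite_subset by blast
  have "T \<noteq> {}" using T j(2) by auto
  then obtain i where iT: "i \<in> T" by blast
  have iB: "i \<in> B" "i \<notin> B'" using iT T by auto
  define S where "S = n ` (B' \<union> (T - {i}))"
  have "n j \<notin> span S"
  proof
    assume "n j \<in> span S"
    then have "?P (T - {i})" using T unfolding S_def by auto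
    then have "card T \<le> card (T - {i})" by (rule Tmin)
    then show False using card_Diff1_less[OF finT iT] by simp
  qed
  moreover have "n ` (B' \<union> T) = insert (n i) S" using iT unfolding S_def by auto
  then have "n j \<in> span (insert (n i) S)" using T by simp
  ultimately have ni: "n i \<in> span (insert (n j) S)"
    using in_span_insert by metis
  have SB: "S \<subseteq> n ` (B - {i})" unfolding S_def using iB T B' by auto
  have nj: "n j \<notin> span (n ` (B - {i}))"
  proof
    assume "n j \<in> span (n ` (B - {i}))"
    then have "insert (n j) S \<subseteq> span (n ` (B - {i}))"
      using SB span_superset[of "n ` (B - {i})"] by (meson insert_subset order_trans)
    then have "span (insert (n j) S) \<subseteq> span (n ` (B - {i}))"
      by (metis span_mono span_span)
    then have "n i \<in> span (n ` (B - {i}))"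
      using ni by (rule subsetD)
    moreover have "n ` (B - {i}) = n ` B - {n i}"
      using indB iB unfolding independent_family_def by (auto simp: inj_on_def)
    ultimately have "dependent (n ` B)"
      unfolding dependent_def using iB(1) by auto
    then show False using indB unfolding independent_family_def by simp
  qed
  have "independent_family n (insert j (B - {i}))"
    using independent_family_insert[OF independent_family_mono[OF indB] nj] by blast
  moreover have "span (n ` insert j (B - {i})) = UNIV"
  proof -
    have "insert (n j) S \<subseteq> n ` insert j (B - {i})" using SB by auto
    then have "span (insert (n j) S) \<subseteq> span (n ` insert j (B - {i}))"
      by (rule span_mono)
    then have "n i \<in> span (n ` insert j (B - {i}))"
      using ni by (rule subsetD)
    then have "n ` B \<subseteq> span (n ` insert j (B - {i}))"
      using span_superset[of "n ` insert j (B - {i})"] by auto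
    then show ?thesis using spanB by (metis span_mono span_span top_unique)
  qed
  ultimately show ?thesis using iB BI j(1) unfolding index_basis_def by blast
qed

lemma span_UNIV_if_indecomposable: "indecomposable n I \<Longrightarrow> span (n ` I) = UNIV"
  unfolding indecomposable_def by simp

lemma index_basis_exchange_across:
  fixes n :: "nat \<Rightarrow> 'v::euclidean_space"
  assumes I: "finite I" "indecomposable n I" and I1: "I1 \<subseteq> I" "I1 \<noteq> {}" "I1 \<noteq> I"
  shows "\<exists>B i j. index_basis n I B \<and> i \<in> B \<inter> I1 \<and> j \<in> I - I1 - B
           \<and> index_basis n I (insert j (B - {i}))"
proof -
  define I2 where "I2 = I - I1"
  have "\<not> (\<exists>J1 J2. J1 \<noteq> {} \<and> J2 \<noteq> {} \<and> J1 \<union> J2 = I \<and> J1 \<inter> J2 = {}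
            \<and> span (n ` J1) \<inter> span (n ` J2) = {0})"
    using I(2) unfolding indecomposable_def by (elim conjE)
  moreover have "I2 \<noteq> {}" "I1 \<union> I2 = I" "I1 \<inter> I2 = {}"
    using I1 unfolding I2_def by auto
  ultimately have "span (n ` I1) \<inter> span (n ` I2) \<noteq> {0}"
    using I1(2) by blast
  moreover have "0 \<in> span (n ` I1) \<inter> span (n ` I2)" by (simp add: span_zero)
  ultimately obtain x where x: "x \<noteq> 0" "x \<in> span (n ` I1)" "x \<in> span (n ` I2)"
    by auto
  obtain B1 where B1: "B1 \<subseteq> I1" "independent_family n B1" "n ` I1 \<subseteq> span (n ` B1)"
    using extend_independent_family[OF independent_family_empty[of n], where J = I1] I finite_subset[OF I1(1)]
    by auto
  obtain B2 where B2: "B2 \<subseteq> I2 - B1" "independent_family n (B1 \<union> B2)"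
    "n ` I2 \<subseteq> span (n ` (B1 \<union> B2))"
    using extend_independent_family[OF B1(2), of I2] I(1) unfolding I2_def by auto
  define B where "B = B1 \<union> B2"
  have "n ` I \<subseteq> span (n ` B)"
    using B1(3) B2(3) span_mono[of "n ` B1" "n ` B"] I1(1) unfolding B_def I2_def by blast
  then have "span (n ` B) = UNIV"
    using span_UNIV_if_indecomposable[OF I(2)] by (metis span_mono span_span top_unique)
  then have basis: "index_basis n I B"
    using B1(1) B2 I1(1) unfolding index_basis_def B_def I2_def by auto
  have "\<not> n ` I2 \<subseteq> span (n ` B2)"
  proof
    assume "n ` I2 \<subseteq> span (n ` B2)"
    then have "x \<in> span (n ` B2)" using x(3) by (metis span_mono span_span subsetD)
    moreover have "x \<in> span (n ` B1)" using x(2) B1(3) by (metis span_mono span_span subsetD)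
    moreover have "n ` B2 = n ` B - n ` B1"
      using B2 unfolding B_def independent_family_def by (auto simp: inj_on_def)
    moreover have "finite (n ` B)"
      using independent_family_finite[OF B2(2)] unfolding B_def by simp
    ultimately have "x = 0"
      using real_vector.span_inter_span_Diff[of "n ` B" "n ` B1"] B2(2)
      unfolding B_def independent_family_def by auto
    then show False using x(1) by simp
  qed
  then obtain j where j: "j \<in> I2" "n j \<notin> span (n ` B2)" by blast
  then have "j \<notin> B" using B1(1) span_superset[of "n ` B2"] unfolding B_def I2_def by auto
  moreover obtain i where "i \<in> B - B2" "index_basis n I (insert j (B - {i}))"
    using index_basis_exchange[OF basis _ _ j(2)] j(1) unfolding B_def I2_def by auto
  ultimately show ?thesis
    using basis B1(1) j(1) unfolding B_def I2_def by blast
qed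

lemma constant_if_sum_over_index_bases_constant:
  fixes n :: "nat \<Rightarrow> 'v::euclidean_space" and a :: "nat \<Rightarrow> 'b::cancel_comm_monoid_add"
  assumes I: "finite I" "indecomposable n I" and sum_a: "\<And>B. index_basis n I B \<Longrightarrow> sum a B = s"
    and "i \<in> I" "j \<in> I"
  shows "a i = a j"
proof -
  have exchange: "a k = a l"
    if "index_basis n I B" "k \<in> B" "l \<notin> B" "index_basis n I (insert l (B - {k}))" for B k l
  proof -
    have "finite B" using that(1) independent_family_finite unfolding index_basis_def by blast
    then have "a k + sum a (B - {k}) = a l + sum a (B - {k})"
      using sum_a[OF that(1)] sum_a[OF that(4)] that(2,3) by (simp add: sum.remove)
    then show ?thesis by simp
  qed
  define J where "J = {m \<in> I. a m = a i}"
  have "J = I"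
  proof (rule ccontr)
    assume "J \<noteq> I"
    moreover have "J \<subseteq> I" "J \<noteq> {}" using \<open>i \<in> I\<close> unfolding J_def by auto
    ultimately obtain B k l where "index_basis n I B" "k \<in> B \<inter> J" "l \<in> I - J - B"
      "index_basis n I (insert l (B - {k}))"
      using index_basis_exchange_across[OF I] by blast
    then show False using exchange unfolding J_def by fastforce
  qed
  then show ?thesis using \<open>j \<in> I\<close> unfolding J_def by (metis (mono_tags, lifting) mem_Collect_eq)
qed

section \<open>Affine subspaces cut out by hyperplanes\<close>

definition null_space :: "(nat \<Rightarrow> 'v::real_inner) \<Rightarrow> nat set \<Rightarrow> 'v set" where
  "null_space n A = {x. \<forall>i\<in>A. n i \<bullet> x = 0}"

lemma subspace_null_space: "subspace (null_space n A)"
  unfolding null_space_def subspace_def by (auto simp: inner_add_right)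

lemma null_space_empty [simp]: "null_space n {} = UNIV"
  unfolding null_space_def by simp

lemma null_space_insert: "null_space n (insert j A) = null_space n A \<inter> {x. n j \<bullet> x = 0}"
  unfolding null_space_def by auto

lemma eq_0_if_orthogonal_to_spanning:
  fixes y :: "'v::euclidean_space"
  assumes "span S = UNIV" "\<And>s. s \<in> S \<Longrightarrow> s \<bullet> y = 0"
  shows "y = 0"
proof -
  have "orthogonal y y"
    using orthogonal_to_span[of y S y] assms by (simp add: orthogonal_def inner_commute)
  then show ?thesis by (simp add: orthogonal_self)
qed

lemma null_space_index_basis:
  fixes n :: "nat \<Rightarrow> 'v::euclidean_space"
  assumes "index_basis n I B"
  shows "null_space n B = {0}"
  using eq_0_if_orthogonal_to_spanning[of "n ` B"] assms
  unfolding index_basis_def null_space_def by auto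

lemma dual_basis_exists:
  fixes n :: "nat \<Rightarrow> 'v::euclidean_space"
  assumes B: "index_basis n I B"
  shows "\<exists>e. \<forall>i\<in>B. \<forall>j\<in>B. n j \<bullet> e i = (if i = j then 1 else 0)"
proof -
  have indB: "independent (n ` B)" "inj_on n B" and spanB: "span (n ` B) = UNIV"
    using B unfolding index_basis_def independent_family_def by auto
  have "\<exists>v. \<forall>j\<in>B. n j \<bullet> v = (if i = j then 1 else 0)" if i: "i \<in> B" for i
  proof -
    have "n ` (B - {i}) = n ` B - {n i}" using indB(2) i by (auto simp: inj_on_def)
    then have "n i \<notin> span (n ` (B - {i}))"
      using indB(1) i unfolding dependent_def by auto
    then obtain v where v: "v \<noteq> 0" "\<forall>x\<in>span (n ` (B - {i})). v \<bullet> x = 0"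
      using span_not_UNIV_orthogonal by (metis UNIV_I)
    have vj: "n j \<bullet> v = 0" if "j \<in> B" "j \<noteq> i" for j
    proof -
      have "n j \<in> span (n ` (B - {i}))" using that by (intro span_base) auto
      then show ?thesis using v(2) inner_commute by metis
    qed
    have "n i \<bullet> v \<noteq> 0"
    proof
      assume "n i \<bullet> v = 0"
      then have "v = 0"
        using eq_0_if_orthogonal_to_spanning[OF spanB] vj by blast
      then show False using v(1) by simp
    qed
    then show ?thesis using vj by (intro exI[of _ "v /\<^sub>R (n i \<bullet> v)"]) auto
  qed
  then show ?thesis by metis
qed

lemma translate_eq: "translate t X = {x. x - t \<in> X}"
  unfolding translate_def by (auto intro!: image_eqI[where x="_ - t"])

lemma translate_hyperplane: "translate t {x. a \<bullet> x = b} = {x. a \<bullet> x = b + a \<bullet> t}"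
  unfolding translate_eq by (auto simp: inner_diff_right)

context
  fixes n :: "nat \<Rightarrow> 'v::euclidean_space" and c :: "nat \<Rightarrow> real" and A :: "nat set"
  assumes nonempty: "{x. \<forall>i\<in>A. n i \<bullet> x = c i} \<noteq> {}"
begin

lemma translate_affine_eq_iff:
  "translate g {x. \<forall>i\<in>A. n i \<bullet> x = c i} = {x. \<forall>i\<in>A. n i \<bullet> x = c i} \<longleftrightarrow> g \<in> null_space n A"
  (is "translate g ?X = ?X \<longleftrightarrow> _")
proof
  obtain p where p: "p \<in> ?X" using nonempty by blast
  assume "translate g ?X = ?X"
  then have "p + g \<in> ?X" using p unfolding translate_eq by auto
  then show "g \<in> null_space n A" using p unfolding null_space_def by (auto simp: inner_add_right)
next
  assume "g \<in> null_space n A"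
  then show "translate g ?X = ?X"
    unfolding translate_eq null_space_def by (auto simp: inner_diff_right)
qed

lemma aff_dim_affine_eq_dim_null_space:
  "aff_dim {x. \<forall>i\<in>A. n i \<bullet> x = c i} = int (dim (null_space n A))"
  (is "aff_dim ?X = _")
proof -
  obtain p where p: "p \<in> ?X" using nonempty by blast
  have "(+) (- p) ` ?X = translate (- p) ?X"
    unfolding translate_def by (simp add: add.commute)
  also have "\<dots> = null_space n A"
    using p unfolding translate_eq null_space_def by (auto simp: inner_add_right)
  finally have "(+) (- p) ` ?X = null_space n A" .
  then show ?thesis using aff_dim_eq_dim[OF hull_inc[OF p]] by simp
qed

end

lemma independent_family_if_dim_null_space:
  fixes n :: "nat \<Rightarrow> 'v::euclidean_space"
  assumes A: "finite A" and dim: "dim (null_space n A) + card A = DIM('v)"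
  shows "independent_family n A"
proof -
  have "{y \<in> UNIV. \<forall>x\<in>span (n ` A). orthogonal x y} = null_space n A"
    unfolding null_space_def orthogonal_def
    by (auto intro: span_base dest: orthogonal_to_span[unfolded orthogonal_def] simp: inner_commute)
  then have "dim (null_space n A) + dim (n ` A) = DIM('v)"
    using dim_subspace_orthogonal_to_vectors[OF subspace_span subspace_UNIV subset_UNIV, of "n ` A"]
    by simp
  then have dimA: "dim (n ` A) = card A" using dim by linarith
  moreover have "dim (n ` A) \<le> card (n ` A)" using A by (intro dim_le_card[OF span_superset]) simp
  moreover have "card (n ` A) \<le> card A" using A by (rule card_image_le)
  ultimately have "card (n ` A) = card A" "card (n ` A) = dim (n ` A)" by linarith+
  then show ?thesis
    unfolding independent_family_def
    using eq_card_imp_inj_on[OF A] card_eq_dim[OF subset_refl, of "n ` A"] span_superset A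
    by (metis finite_imageI)
qed

lemma in_Q_span_if_multiples_in_finitely_many_cosets:
  assumes P: "finite P" and covered: "\<And>k::nat. z + of_nat k *\<^sub>R v \<in> {p + g | p g. p \<in> P \<and> g \<in> int_span B}"
  shows "v \<in> Q.span (int_span B)"
proof -
  have "\<exists>p. p \<in> P \<and> z + of_nat k *\<^sub>R v - p \<in> int_span B" for k
    using covered[of k] by force
  then obtain p where p: "\<And>k. p k \<in> P" "\<And>k. z + of_nat k *\<^sub>R v - p k \<in> int_span B"
    by metis
  have "\<not> inj_on p {..card P}"
  proof (rule pigeonhole)
    show "card (p ` {..card P}) < card {..card P}"
      using card_mono[OF P, of "p ` {..card P}"] p(1) by (simp add: image_subset_iff less_Suc_eq_le)
  qed
  then obtain k1 k2 where k: "k1 \<noteq> k2" "p k1 = p k2" unfolding inj_on_def by blast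
  then have "(z + of_nat k1 *\<^sub>R v - p k1) - (z + of_nat k2 *\<^sub>R v - p k2) = (of_nat k1 - of_nat k2) *\<^sub>R v"
    by (simp add: scaleR_diff_left)
  then have "(of_nat k1 - of_nat k2) *\<^sub>R v \<in> int_span B"
    using int_span_diff[OF p(2) p(2)] by metis
  then have "scaleQ (1 / (of_nat k1 - of_nat k2)) ((of_nat k1 - of_nat k2) *\<^sub>R v) \<in> Q.span (int_span B)"
    by (intro Q.span_scale Q.span_base)
  then show ?thesis using k(1) by (simp add: scaleQ_def of_rat_divide of_rat_diff)
qed

section \<open>Periodic hyperplane arrangements\<close>

lemma Q_linear_scaled_inner: "Vector_Spaces.linear scaleQ scaleQ (\<lambda>x. (a \<bullet> x) *\<^sub>R b)"
  by (intro linear_imp_Q_linear) (simp add: linear_iff inner_add_right scaleR_add_left)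

lemma Q_dim_zero: "Q.dim {0::'a::real_vector} = 0"
  using Q.dim_span[of "{} :: 'a set"] Q.dim_eq_card_independent[OF Q.independent_empty] by simp

locale periodic_arrangement =
  fixes \<Gamma> \<Gamma>0 :: "'v::euclidean_space set" and C :: "'v set set"
    and n :: "nat \<Rightarrow> 'v" and c :: "nat \<Rightarrow> real" and I :: "nat set" and P :: "'v set"
  assumes \<Gamma>_generated: "finite \<Gamma>0" "\<Gamma> = int_span \<Gamma>0"
    and C_invariant: "\<And>H g. H \<in> C \<Longrightarrow> g \<in> \<Gamma> \<Longrightarrow> translate g H \<in> C"
    and hyperplanes_in_C: "\<And>i. i \<in> I \<Longrightarrow> {x. n i \<bullet> x = c i} \<in> C"
    and vertex_orbits: "finite P" "vertex_set DIM('v) C \<subseteq> {p + g | p g. p \<in> P \<and> g \<in> \<Gamma>}"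
begin

definition U :: "'v set" where "U = Q.span \<Gamma>"

definition N :: nat where "N = Q.dim U"

text \<open>N is rk \<Gamma> and codim i is rk \<Gamma> - rk \<Gamma>^{i} (see group_rank_inter_null_space).\<close>

definition codim :: "nat \<Rightarrow> nat" where "codim i = N - Q.dim (U \<inter> null_space n {i})"

lemma U_subset_Q_span_generators: "U \<subseteq> Q.span \<Gamma>0"
  using Q_span_int_span[OF \<Gamma>_generated(1)] \<Gamma>_generated(2) unfolding U_def by simp

lemma Q_subspace_U_inter_null_space: "Q.subspace (U \<inter> null_space n A)"
  unfolding U_def
  by (intro Q.subspace_inter Q.subspace_span subspace_imp_Q_subspace subspace_null_space)

lemma group_rank_inter_null_space: "group_rank (\<Gamma> \<inter> null_space n A) = Q.dim (U \<inter> null_space n A)"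
proof -
  have "group_rank (\<Gamma> \<inter> null_space n A) = Q.dim (\<Gamma> \<inter> null_space n A)"
    using \<Gamma>_generated int_span_subset_Q_span by (intro group_rank_eq_Q_dim) blast+
  also have "\<dots> = Q.dim (Q.span (\<Gamma> \<inter> null_space n A))" by simp
  also have "Q.span (\<Gamma> \<inter> null_space n A) = U \<inter> null_space n A"
    unfolding U_def using Q_span_int_span_inter_subspace[OF subspace_null_space] \<Gamma>_generated(2)
    by simp
  finally show ?thesis .
qed

lemma group_rank_eq_N: "group_rank \<Gamma> = N"
  using group_rank_inter_null_space[of "{}"] unfolding N_def by simp

context
  fixes B :: "nat set" and e :: "nat \<Rightarrow> 'v"
  assumes basis: "index_basis n I B"
    and dual: "\<And>i j. i \<in> B \<Longrightarrow> j \<in> B \<Longrightarrow> n j \<bullet> e i = (if i = j then 1 else 0)"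
begin

lemma vertex_of_index_basis:
  assumes g: "\<And>i. i \<in> B \<Longrightarrow> g i \<in> \<Gamma>"
  shows "(\<Sum>i\<in>B. (c i + n i \<bullet> g i) *\<^sub>R e i) \<in> vertex_set DIM('v) C"
proof -
  define t where "t i = c i + n i \<bullet> g i" for i
  define z where "z = (\<Sum>i\<in>B. t i *\<^sub>R e i)"
  define H where "H i = {x. n i \<bullet> x = t i}" for i
  have finB: "finite B" and BI: "B \<subseteq> I" and spanB: "span (n ` B) = UNIV"
    using basis independent_family_finite unfolding index_basis_def by auto
  have inner_z: "n j \<bullet> (z + y) = t j + n j \<bullet> y" if "j \<in> B" for j y
  proof -
    have "n j \<bullet> z = (\<Sum>i\<in>B. t i * (n j \<bullet> e i))" unfolding z_def by (simp add: inner_sum_right)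
    also have "\<dots> = (\<Sum>i\<in>B. if i = j then t i else 0)" using that dual by (intro sum.cong) auto
    also have "\<dots> = t j" using that finB by simp
    finally show ?thesis by (simp add: inner_add_right)
  qed
  have "H ` B \<subseteq> C"
    using C_invariant[OF hyperplanes_in_C] g BI unfolding H_def t_def
    by (auto simp: translate_hyperplane)
  moreover have "inj_on H B"
  proof (rule inj_onI, rule ccontr)
    fix i j assume ij: "i \<in> B" "j \<in> B" "H i = H j" "i \<noteq> j"
    have "z + e j \<in> H i" using inner_z[OF ij(1)] dual[OF ij(2,1)] ij(4) unfolding H_def by simp
    then show False using inner_z[OF ij(2)] dual[OF ij(2,2)] ij(3) unfolding H_def by simp
  qed
  then have "card (H ` B) = DIM('v)" using card_image index_basis_card[OF basis] by metis
  moreover have "\<Inter>(H ` B) = {z}"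
  proof (intro set_eqI iffI)
    fix x assume "x \<in> \<Inter>(H ` B)"
    then have "\<forall>j\<in>B. n j \<bullet> (x - z) = 0"
      using inner_z[of _ 0] unfolding H_def by (simp add: inner_diff_right)
    then show "x \<in> {z}"
      using eq_0_if_orthogonal_to_spanning[OF spanB, of "x - z"] by auto
  qed (use inner_z[of _ 0] H_def in auto)
  ultimately show ?thesis unfolding vertex_set_def z_def t_def using finB by blast
qed

lemma coordinate_projection_in_U:
  assumes j: "j \<in> B" and u: "u \<in> U"
  shows "(n j \<bullet> u) *\<^sub>R e j \<in> U"
proof -
  have finB: "finite B" using basis independent_family_finite unfolding index_basis_def by auto
  have generators: "(n j \<bullet> \<gamma>) *\<^sub>R e j \<in> U" if \<gamma>: "\<gamma> \<in> \<Gamma>" for \<gamma>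
  proof -
    define z where "z = (\<Sum>i\<in>B. c i *\<^sub>R e i)"
    define g where "g k i = (if i = j then of_nat k *\<^sub>R \<gamma> else 0)" for k :: nat and i
    have "g k i \<in> \<Gamma>" for k i
      using int_span_scale[of \<gamma> \<Gamma>0 "int k"] int_span_zero \<gamma> \<Gamma>_generated(2) unfolding g_def by auto
    then have "(\<Sum>i\<in>B. (c i + n i \<bullet> g k i) *\<^sub>R e i) \<in> vertex_set DIM('v) C" for k
      by (rule vertex_of_index_basis)
    moreover have "(\<Sum>i\<in>B. (c i + n i \<bullet> g k i) *\<^sub>R e i) = z + of_nat k *\<^sub>R ((n j \<bullet> \<gamma>) *\<^sub>R e j)" for k
    proof -
      have "(\<Sum>i\<in>B. (n i \<bullet> g k i) *\<^sub>R e i) = (\<Sum>i\<in>B. if i = j then (of_nat k * (n j \<bullet> \<gamma>)) *\<^sub>R e j else 0)"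
        unfolding g_def by (intro sum.cong) auto
      then show ?thesis using j finB unfolding z_def by (simp add: scaleR_add_left sum.distrib)
    qed
    ultimately have "z + of_nat k *\<^sub>R ((n j \<bullet> \<gamma>) *\<^sub>R e j) \<in> vertex_set DIM('v) C" for k
      by metis
    then have "z + of_nat k *\<^sub>R ((n j \<bullet> \<gamma>) *\<^sub>R e j) \<in> {p + g | p g. p \<in> P \<and> g \<in> int_span \<Gamma>0}" for k
      unfolding \<Gamma>_generated(2)[symmetric] using vertex_orbits(2) by blast
    then show ?thesis
      using in_Q_span_if_multiples_in_finitely_many_cosets[OF vertex_orbits(1)] \<Gamma>_generated(2)
      unfolding U_def by blast
  qed
  interpret projection: Vector_Spaces.linear scaleQ scaleQ "\<lambda>x. (n j \<bullet> x) *\<^sub>R e j"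
    by (rule Q_linear_scaled_inner)
  have "(\<lambda>x. (n j \<bullet> x) *\<^sub>R e j) ` U = Q.span ((\<lambda>x. (n j \<bullet> x) *\<^sub>R e j) ` \<Gamma>)"
    unfolding U_def by (rule projection.span_image[symmetric])
  also have "\<dots> \<subseteq> U"
    using generators unfolding U_def by (intro Q.span_minimal Q.subspace_span) auto
  finally show ?thesis using u by blast
qed

lemma Q_dim_image_coordinate_projection:
  assumes j: "j \<in> B"
  shows "Q.dim ((\<lambda>x. (n j \<bullet> x) *\<^sub>R e j) ` U) = codim j"
proof -
  have "e j \<noteq> 0" using dual[OF j j] by auto
  then have "U \<inter> {x. (n j \<bullet> x) *\<^sub>R e j = 0} = U \<inter> null_space n {j}"
    unfolding null_space_def by auto
  moreover have "N = Q.dim (U \<inter> {x. (n j \<bullet> x) *\<^sub>R e j = 0}) + Q.dim ((\<lambda>x. (n j \<bullet> x) *\<^sub>R e j) ` U)"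
    unfolding N_def U_def
    by (rule Q.dim_eq_dim_kernel_add_dim_image[OF Q_linear_scaled_inner Q.subspace_span
          U_subset_Q_span_generators[unfolded U_def] \<Gamma>_generated(1)])
  ultimately show ?thesis unfolding codim_def by simp
qed

lemma Q_dim_U_inter_null_space_add_sum_codim:
  assumes "A \<subseteq> B"
  shows "Q.dim (U \<inter> null_space n A) + sum codim A = N"
proof -
  have "finite A"
    using assms basis independent_family_finite finite_subset unfolding index_basis_def by metis
  then show ?thesis using assms
  proof (induction rule: finite_induct)
    case empty
    show ?case unfolding N_def by simp
  next
    case (insert j A)
    define \<pi> where "\<pi> x = (n j \<bullet> x) *\<^sub>R e j" for x
    have j: "j \<in> B" and A: "A \<subseteq> B" using insert.prems by auto
    have "e j \<noteq> 0" using dual[OF j j] by auto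
    then have kernel: "(U \<inter> null_space n A) \<inter> {x. \<pi> x = 0} = U \<inter> null_space n (insert j A)"
      unfolding \<pi>_def null_space_insert by auto
    have "\<pi> ` U \<subseteq> \<pi> ` (U \<inter> null_space n A)"
    proof
      fix y assume "y \<in> \<pi> ` U"
      then obtain u where u: "u \<in> U" "y = \<pi> u" by blast
      have "\<pi> u \<in> U" using coordinate_projection_in_U[OF j u(1)] unfolding \<pi>_def .
      moreover have "\<pi> u \<in> null_space n A"
        using dual[OF j] A insert.hyps(2) unfolding \<pi>_def null_space_def by auto
      moreover have "\<pi> (\<pi> u) = \<pi> u" using dual[OF j j] unfolding \<pi>_def by simp
      ultimately show "y \<in> \<pi> ` (U \<inter> null_space n A)" using u(2) by (metis IntI image_eqI)
    qed
    then have image: "\<pi> ` (U \<inter> null_space n A) = \<pi> ` U" by blast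
    have "Q.dim (U \<inter> null_space n A)
          = Q.dim (U \<inter> null_space n (insert j A)) + Q.dim (\<pi> ` (U \<inter> null_space n A))"
      unfolding kernel[symmetric]
      using U_subset_Q_span_generators unfolding \<pi>_def
      by (intro Q.dim_eq_dim_kernel_add_dim_image[OF Q_linear_scaled_inner
            Q_subspace_U_inter_null_space _ \<Gamma>_generated(1)]) blast
    also have "Q.dim (\<pi> ` (U \<inter> null_space n A)) = codim j"
      unfolding image \<pi>_def by (rule Q_dim_image_coordinate_projection[OF j])
    finally show ?case using insert.IH[OF A] insert.hyps by simp
  qed
qed

lemma sum_codim_index_basis: "sum codim B = N"
proof -
  have "U \<inter> null_space n B = {0}"
    using null_space_index_basis[OF basis] Q.span_zero unfolding U_def by auto
  then show ?thesis using Q_dim_U_inter_null_space_add_sum_codim[of B] by (simp add: Q_dim_zero)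
qed

end

lemma sum_codim_eq_N: "index_basis n I B \<Longrightarrow> sum codim B = N"
  using dual_basis_exists sum_codim_index_basis by metis

context
  assumes I: "finite I" "indecomposable n I"
begin

lemma codim_eq: "i \<in> I \<Longrightarrow> j \<in> I \<Longrightarrow> codim i = codim j"
  using constant_if_sum_over_index_bases_constant[OF I sum_codim_eq_N] .

lemma sum_codim_eq_card_mult:
  assumes "A \<subseteq> I" "i \<in> I"
  shows "sum codim A = card A * codim i"
proof -
  have "codim k = codim i" if "k \<in> A" for k
    using codim_eq[of k i] assms that by blast
  then show ?thesis by simp
qed

lemma N_eq_DIM_mult_codim:
  assumes "i \<in> I"
  shows "N = DIM('v) * codim i"
proof -
  obtain B where "index_basis n I B"
    using exists_index_basis_superset[OF independent_family_empty _ I(1) span_UNIV_if_indecomposable[OF I(2)]] by blast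
  then show ?thesis
    using sum_codim_eq_N sum_codim_eq_card_mult[OF _ assms] index_basis_card
    unfolding index_basis_def by metis
qed

lemma Q_dim_U_inter_null_space:
  assumes A: "independent_family n A" "A \<subseteq> I" and i: "i \<in> I"
  shows "Q.dim (U \<inter> null_space n A) = (DIM('v) - card A) * codim i"
proof -
  obtain B where B: "A \<subseteq> B" "index_basis n I B"
    using exists_index_basis_superset[OF A I(1) span_UNIV_if_indecomposable[OF I(2)]] by blast
  obtain e where e: "\<And>i j. i \<in> B \<Longrightarrow> j \<in> B \<Longrightarrow> n j \<bullet> e i = (if i = j then 1 else 0)"
    using dual_basis_exists[OF B(2)] by blast
  have "Q.dim (U \<inter> null_space n A) + card A * codim i = DIM('v) * codim i"
    using Q_dim_U_inter_null_space_add_sum_codim[OF B(2) e B(1)] sum_codim_eq_card_mult[OF A(2) i]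
      N_eq_DIM_mult_codim[OF i] by simp
  then show ?thesis by (simp add: diff_mult_distrib)
qed

lemma group_rank_stabilizer_flat:
  assumes A: "A \<subseteq> I" and X: "aff_dim {x. \<forall>i\<in>A. n i \<bullet> x = c i} = int l"
    and card: "card A + l = DIM('v)" and i: "i \<in> I"
  shows "group_rank (stabilizer \<Gamma> {x. \<forall>i\<in>A. n i \<bullet> x = c i}) = l * codim i"
proof -
  have nonempty: "{x. \<forall>i\<in>A. n i \<bullet> x = c i} \<noteq> {}"
  proof
    assume empty: "{x. \<forall>i\<in>A. n i \<bullet> x = c i} = {}"
    have "aff_dim {x. \<forall>i\<in>A. n i \<bullet> x = c i} = -1" unfolding empty by simp
    then show False using X by simp
  qed
  have "stabilizer \<Gamma> {x. \<forall>i\<in>A. n i \<bullet> x = c i} = \<Gamma> \<inter> null_space n A"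
    using translate_affine_eq_iff[OF nonempty] unfolding stabilizer_def by auto
  moreover have "dim (null_space n A) = l"
    using aff_dim_affine_eq_dim_null_space[OF nonempty] X by simp
  then have "independent_family n A"
    using independent_family_if_dim_null_space[of A n] card finite_subset[OF A I(1)] by simp
  moreover have "DIM('v) - card A = l" using card by linarith
  ultimately show ?thesis
    using group_rank_inter_null_space[of A] Q_dim_U_inter_null_space[OF _ A i] by simp
qed

end

end

theorem mainTheorem6:
  fixes \<Gamma> :: "'v::euclidean_space set"
    and C :: "'v set set"
    and W :: "nat \<Rightarrow> 'v set"
    and n :: "nat \<Rightarrow> 'v"
    and c :: "nat \<Rightarrow> real"
    and f :: nat
  assumes \<Gamma>_free: "fg_free_subgroup \<Gamma>"
    and \<Gamma>_dense: "closure \<Gamma> = UNIV"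
    and C_count: "countable C"
    and C_hyp: "\<forall>H\<in>C. affine_hyperplane H"
    and C_inv: "\<forall>H\<in>C. \<forall>g\<in>\<Gamma>. translate g H \<in> C"
    and C_orbits: "finitely_many_orbits \<Gamma> C"
    and C_span: "span (normals C) = UNIV"
    and W_in: "\<forall>i\<in>{1..f}. W i \<in> C"
    and W_inj: "inj_on W {1..f}"
    and f_gt: "f > DIM('v)"
    and W_eq: "\<forall>i\<in>{1..f}. n i \<noteq> 0 \<and> W i = {x. n i \<bullet> x = c i}"
    and W_indec: "indecomposable n {1..f}"
    and P_orbits: "finitely_many_point_orbits \<Gamma> (vertex_set DIM('v) C)"
  shows "(\<forall>l \<le> DIM('v). \<forall>A \<in> I_set W f l.
            real (group_rank (stabilizer \<Gamma> (W_int W A)))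
              = real l * real (group_rank \<Gamma>) / real DIM('v))
         \<and> DIM('v) dvd group_rank \<Gamma>"
proof -
  obtain \<Gamma>0 where \<Gamma>0: "finite \<Gamma>0" "\<Gamma> = int_span \<Gamma>0"
    using \<Gamma>_free unfolding fg_free_subgroup_def by blast
  obtain P where P: "finite P" "vertex_set DIM('v) C = {p + g | p g. p \<in> P \<and> g \<in> \<Gamma>}"
    using P_orbits unfolding finitely_many_point_orbits_def by blast
  interpret periodic_arrangement \<Gamma> \<Gamma>0 C n c "{1..f}" P
    using \<Gamma>0 P C_inv W_in W_eq by unfold_locales auto
  have I: "finite {1..f}" "indecomposable n {1..f}" using W_indec by auto
  have one: "1 \<in> {1..f}" using f_gt by simp
  have rank: "group_rank \<Gamma> = DIM('v) * codim 1"
    using group_rank_eq_N N_eq_DIM_mult_codim[OF I one] by simp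
  have "real (group_rank (stabilizer \<Gamma> (W_int W A))) = real l * real (group_rank \<Gamma>) / real DIM('v)"
    if "l \<le> DIM('v)" "A \<in> I_set W f l" for l A
  proof -
    have A: "A \<subseteq> {1..f}" "aff_dim (W_int W A) = int l" "card A + l = DIM('v)"
      using that unfolding I_set_def by auto
    moreover have "W_int W A = {x. \<forall>i\<in>A. n i \<bullet> x = c i}"
      using A(1) W_eq unfolding W_int_def by auto
    ultimately have "group_rank (stabilizer \<Gamma> (W_int W A)) = l * codim 1"
      using group_rank_stabilizer_flat[OF I A(1) _ _ one] by simp
    then show ?thesis using rank by simp
  qed
  then show ?thesis using rank by simp
qed

end
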